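(* Let $n\ge 1$ and $m\ge 0$ be integers and let $Y_{n,m}$ be the Yoke graph. Then: (1) If $n=1$, then $\operatorname{diam}(Y_{n,m})=\binom{\lceil m/2\rceil+1}{2}+\binom{\lfloor m/2\rfloor+1}{2}$. (2) If $0\le m\le n$, then $\operatorname{diam}(Y_{n,m})=\lfloor n(m+1)/2\rfloor$. (3) If $2\le n\le m$, let $d_0=\binom{\lfloor (m+n)/2\rfloor+1}{2}+\binom{\lceil (m-n)/2\rceil+1}{2}$. Then (a) if either $2\mid (m-n)$ or $n\le \lceil (m+1)/2\rceil$, then $\operatorname{diam}(Y_{n,m})=d_0$; (b) otherwise $\operatorname{diam}(Y_{n,m})=d_0+n-\lceil (m+1)/2\rceil$.
   Context: For integers $n\ge1$, $m\ge0$, the Yoke graph $Y_{n,m}$ is the simple graph whose vertices are the tuples $v=(v_0,v_1,\dots,v_m,v_{m+1})$ with $v_0,v_{m+1}\in\mathbb{Z}_n$ (the "buckets"), $v_1,\dots,v_m\in\{0,1\}$, and $\sum_{i=0}^{m+1}v_i\equiv 0\pmod n$ (each bucket identified with its least non-negative representative). Two vertices $u,v$ are adjacent iff there is $0\le i\le m$ such that $u_j=v_j$ for all $j\notin\{i,i+1\}$ and either ($u_i=v_i+1$ and $u_{i+1}=v_{i+1}-1$) or ($u_i=v_i-1$ and $u_{i+1}=v_{i+1}+1$), where bucket entries are computed modulo $n$. The diameter is the maximum graph distance between two vertices. *)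

theory Defs
  imports Main "HOL-Library.Extended_Nat"
begin

text \<open>Vertices of the Yoke graph Y_{n,m} are represented as integer lists
  v = [v_0, v_1, ..., v_m, v_{m+1}] of length m+2. Positions 0 and m+1 are the
  buckets (values in Z_n, stored by least non-negative representative, i.e. in
  {0..<n}); positions 1..m hold values in {0,1}.\<close>

definition is_bucket :: "nat \<Rightarrow> nat \<Rightarrow> bool" where
  "is_bucket m j \<longleftrightarrow> j = 0 \<or> j = m + 1"

definition yoke_vertices :: "nat \<Rightarrow> nat \<Rightarrow> int list set" where
  "yoke_vertices n m = {v. length v = m + 2
      \<and> (\<forall>j < m + 2. if is_bucket m j then 0 \<le> v ! j \<and> v ! j < int n
                                   else v ! j \<in> {0, 1})
      \<and> sum_list v mod int n = 0}"

definition entry_eq :: "nat \<Rightarrow> nat \<Rightarrow> nat \<Rightarrow> int \<Rightarrow> int \<Rightarrow> bool" where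
  "entry_eq n m j a b \<longleftrightarrow> (if is_bucket m j then a mod int n = b mod int n else a = b)"

definition yoke_adj :: "nat \<Rightarrow> nat \<Rightarrow> int list \<Rightarrow> int list \<Rightarrow> bool" where
  "yoke_adj n m u v \<longleftrightarrow> u \<in> yoke_vertices n m \<and> v \<in> yoke_vertices n m \<and> u \<noteq> v \<and>
     (\<exists>i \<le> m. (\<forall>j < m + 2. j \<noteq> i \<and> j \<noteq> i + 1 \<longrightarrow> u ! j = v ! j) \<and>
        ((entry_eq n m i (u ! i) (v ! i + 1) \<and> entry_eq n m (i+1) (u ! (i+1)) (v ! (i+1) - 1)) \<or>
         (entry_eq n m i (u ! i) (v ! i - 1) \<and> entry_eq n m (i+1) (u ! (i+1)) (v ! (i+1) + 1))))"

definition yoke_edges :: "nat \<Rightarrow> nat \<Rightarrow> (int list \<times> int list) set" where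
  "yoke_edges n m = {(u, v). yoke_adj n m u v}"

definition yoke_dist :: "nat \<Rightarrow> nat \<Rightarrow> int list \<Rightarrow> int list \<Rightarrow> enat" where
  "yoke_dist n m u v = (INF k \<in> {k::nat. (u, v) \<in> (yoke_edges n m) ^^ k}. enat k)"

definition yoke_diam :: "nat \<Rightarrow> nat \<Rightarrow> enat" where
  "yoke_diam n m = (SUP u \<in> yoke_vertices n m. SUP v \<in> yoke_vertices n m. yoke_dist n m u v)"

end

theory Submission
  imports Defs
begin

text \<open>
  Read a vertex as a configuration of chips: each interior position holds at most one chip, the
  two buckets hold chips counted modulo \<open>n\<close>, and an edge moves one chip to a neighbouring
  position. To go from \<open>v\<close> to \<open>w\<close> one chooses the net number \<open>t\<close> of chips crossing the edge
  between positions \<open>0\<close> and \<open>1\<close>, subject only to \<open>t \<equiv> v\<^sub>0 - w\<^sub>0 (mod n)\<close>; the net flow through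
  the edge between positions \<open>l\<close> and \<open>l + 1\<close> is then \<open>t - S l\<close>, where \<open>S l = gain v w l\<close> is the
  sum of \<open>w\<^sub>i - v\<^sub>i\<close> over \<open>1 \<le> i \<le> l\<close>. Every move changes one of these flows by one, and a
  suitable chip can always be moved so that the total absolute flow drops by one. Hence the
  distance is the minimum of the convex function \<open>flow_cost S m t = \<Sum>\<^sub>l\<^sub>\<le>\<^sub>m |t - S l|\<close> over a
  residue class modulo \<open>n\<close>, and since \<open>S\<close> ranges over all lazy walks (steps in \<open>{-1, 0, 1}\<close>)
  of length \<open>m\<close> starting at \<open>0\<close>, the diameter is the largest such minimum over lazy walks and
  residue classes.

  By convexity, for the upper bound it suffices to find \<open>n\<close> consecutive integers at whose ends
  the cost is small. The key estimate is that the points of a lazy walk lying below (above) a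
  level that the walk reaches contribute at most a triangular number to the cost at that level.
  The bound is attained by the identity walk, the constant walk, and perturbations of these at
  the middle position.
\<close>

section \<open>Lazy walks and their flow cost\<close>

definition lazy_walk :: "(nat \<Rightarrow> int) \<Rightarrow> nat \<Rightarrow> bool" where
  "lazy_walk s m \<longleftrightarrow> (\<forall>j<m. \<bar>s (Suc j) - s j\<bar> \<le> 1)"

definition flow_cost :: "(nat \<Rightarrow> int) \<Rightarrow> nat \<Rightarrow> int \<Rightarrow> int" where
  "flow_cost s m t = (\<Sum>j\<le>m. \<bar>t - s j\<bar>)"

definition count_below :: "(nat \<Rightarrow> int) \<Rightarrow> nat \<Rightarrow> int \<Rightarrow> nat" where
  "count_below s m a = card {j. j \<le> m \<and> s j < a}"

definition count_above :: "(nat \<Rightarrow> int) \<Rightarrow> nat \<Rightarrow> int \<Rightarrow> nat" where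
  "count_above s m b = card {j. j \<le> m \<and> b < s j}"

definition deficit :: "(nat \<Rightarrow> int) \<Rightarrow> nat \<Rightarrow> int \<Rightarrow> int" where
  "deficit s m a = (\<Sum>j | j \<le> m \<and> s j < a. a - s j)"

definition excess :: "(nat \<Rightarrow> int) \<Rightarrow> nat \<Rightarrow> int \<Rightarrow> int" where
  "excess s m b = (\<Sum>j | j \<le> m \<and> b < s j. s j - b)"

definition tri :: "nat \<Rightarrow> nat" where
  "tri k = k * (k + 1) div 2"

lemma two_tri: "2 * tri k = k * (k + 1)"
  unfolding tri_def by simp

lemma two_tri_int: "2 * int (tri k) = int k * (int k + 1)"
  using arg_cong[OF two_tri, of int, of k] by (simp add: algebra_simps)

lemma tri_0 [simp]: "tri 0 = 0"
  unfolding tri_def by simp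

lemma tri_Suc: "tri (Suc k) = tri k + Suc k"
  using two_tri[of k] two_tri[of "Suc k"] by simp

lemma tri_mono: "j \<le> k \<Longrightarrow> tri j \<le> tri k"
  unfolding tri_def by (intro div_le_mono mult_le_mono) auto

lemma lazy_walk_uminus: "lazy_walk s m \<Longrightarrow> lazy_walk (\<lambda>j. - s j) m"
  unfolding lazy_walk_def by (simp add: abs_minus_commute)

lemma lazy_walk_ivt_forward:
  assumes s: "lazy_walk s m" and "j \<le> m" "i \<le> j" "s i \<le> y" "y \<le> s j"
  shows "\<exists>l\<le>m. s l = y"
  using assms(2-)
proof (induction j)
  case 0
  then show ?case by auto
next
  case (Suc j)
  show ?case
  proof (cases "i \<le> j \<and> y \<le> s j")
    case True
    then show ?thesis using Suc by auto
  next
    case False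
    have "\<bar>s (Suc j) - s j\<bar> \<le> 1" using s Suc.prems(1) unfolding lazy_walk_def by auto
    then have "y = s (Suc j)" using False Suc.prems by (cases "i = Suc j") auto
    then show ?thesis using Suc.prems(1) by blast
  qed
qed

lemma lazy_walk_ivt:
  assumes s: "lazy_walk s m" and "i \<le> m" "j \<le> m" "s i \<le> y" "y \<le> s j"
  shows "\<exists>l\<le>m. s l = y"
proof (cases "i \<le> j")
  case True
  then show ?thesis using lazy_walk_ivt_forward[OF s] assms by blast
next
  case False
  then have "\<exists>l\<le>m. - s l = - y"
    using lazy_walk_ivt_forward[OF lazy_walk_uminus[OF s], of i j "- y"] assms by simp
  then show ?thesis by simp
qed

lemma count_below_le: "count_below s m a \<le> Suc m"
  unfolding count_below_def using card_mono[of "{..m}" "{j. j \<le> m \<and> s j < a}"] by auto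

lemma count_below_pos_iff: "0 < count_below s m a \<longleftrightarrow> (\<exists>j\<le>m. s j < a)"
  unfolding count_below_def by (auto simp: card_gt_0_iff)

lemma count_below_less_iff: "count_below s m a < Suc m \<longleftrightarrow> (\<exists>j\<le>m. a \<le> s j)"
proof -
  have "count_below s m a = Suc m \<longleftrightarrow> {j. j \<le> m \<and> s j < a} = {..m}"
    unfolding count_below_def using card_subset_eq[of "{..m}" "{j. j \<le> m \<and> s j < a}"] by auto
  then show ?thesis using count_below_le[of s m a] by (force simp: not_le set_eq_iff)
qed

lemma count_below_mono: "a \<le> b \<Longrightarrow> count_below s m a \<le> count_below s m b"
  unfolding count_below_def by (intro card_mono) auto

lemma count_above_eq_count_below_uminus: "count_above s m b = count_below (\<lambda>j. - s j) m (- b)"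
  unfolding count_above_def count_below_def by simp

lemma excess_eq_deficit_uminus: "excess s m b = deficit (\<lambda>j. - s j) m (- b)"
  unfolding excess_def deficit_def by (intro sum.cong) auto

lemma flow_cost_uminus: "flow_cost (\<lambda>j. - s j) m (- t) = flow_cost s m t"
  unfolding flow_cost_def by (intro sum.cong) auto

lemma flow_cost_nonneg: "0 \<le> flow_cost s m t"
  unfolding flow_cost_def by (simp add: sum_nonneg)

lemma count_below_altdef: "int (count_below s m a) = (\<Sum>j\<le>m. of_bool (s j < a))"
  unfolding count_below_def by (simp add: Int_def conj_commute)

lemma deficit_altdef: "deficit s m a = (\<Sum>j\<le>m. if s j < a then a - s j else 0)"
  unfolding deficit_def by (simp add: sum.inter_filter[symmetric])

lemma excess_altdef: "excess s m b = (\<Sum>j\<le>m. if b < s j then s j - b else 0)"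
  unfolding excess_def by (simp add: sum.inter_filter[symmetric])

lemma flow_cost_split: "flow_cost s m a = deficit s m a + excess s m a"
  unfolding flow_cost_def deficit_altdef excess_altdef sum.distrib[symmetric]
  by (intro sum.cong) auto

lemma flow_cost_pair:
  assumes "0 \<le> d"
  shows "flow_cost s m a + flow_cost s m (a + d)
      = int (Suc m) * d + 2 * deficit s m a + 2 * excess s m (a + d)"
proof -
  have "flow_cost s m a + flow_cost s m (a + d)
      = (\<Sum>j\<le>m. d + 2 * (if s j < a then a - s j else 0) + 2 * (if a + d < s j then s j - (a + d) else 0))"
    unfolding flow_cost_def sum.distrib[symmetric] using assms by (intro sum.cong) auto
  then show ?thesis
    unfolding deficit_altdef excess_altdef by (simp add: sum.distrib sum_distrib_left)
qed

lemma flow_cost_step: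
  "flow_cost s m (a + 1) = flow_cost s m a + 2 * int (count_below s m (a + 1)) - int (Suc m)"
proof -
  have "flow_cost s m (a + 1) = (\<Sum>j\<le>m. \<bar>a - s j\<bar> + (2 * of_bool (s j < a + 1) - 1))"
    unfolding flow_cost_def by (intro sum.cong) auto
  then show ?thesis
    unfolding flow_cost_def count_below_altdef by (simp add: sum.distrib sum_subtractf sum_distrib_left)
qed

lemma flow_cost_telescope:
  "flow_cost s m (a + int T)
     = flow_cost s m a + (\<Sum>i<T. 2 * int (count_below s m (a + int i + 1)) - int (Suc m))"
proof (induction T)
  case (Suc T)
  have "a + int (Suc T) = (a + int T) + 1" by simp
  then show ?case using Suc flow_cost_step[of s m "a + int T"] by (simp add: algebra_simps)
qed simp

lemma count_below_less_succ:
  assumes s: "lazy_walk s m" and "i \<le> m" "j \<le> m" "s i \<le> b" "b \<le> s j"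
  shows "count_below s m b < count_below s m (b + 1)"
proof -
  obtain l where l: "l \<le> m" "s l = b" using lazy_walk_ivt[OF assms] by blast
  have "{j. j \<le> m \<and> s j < b} \<subset> {j. j \<le> m \<and> s j < b + 1}" using l by auto
  then show ?thesis unfolding count_below_def by (intro psubset_card_mono) auto
qed

lemma count_below_succ_add_count_above: "count_below s m (b + 1) + count_above s m b = Suc m"
proof -
  have "{j. j \<le> m \<and> s j < b + 1} \<union> {j. j \<le> m \<and> b < s j} = {..m}" by auto
  moreover have "card ({j. j \<le> m \<and> s j < b + 1} \<union> {j. j \<le> m \<and> b < s j})
      = count_below s m (b + 1) + count_above s m b"
    unfolding count_below_def count_above_def by (rule card_Un_disjoint) auto
  ultimately show ?thesis by simp
qed

lemma deficit_eq_0: "count_below s m a = 0 \<Longrightarrow> deficit s m a = 0"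
  unfolding count_below_def deficit_def by (auto intro!: sum.neutral)

lemma deficit_pred: "deficit s m a = int (count_below s m a) + deficit s m (a - 1)"
  unfolding deficit_altdef count_below_altdef sum.distrib[symmetric] by (intro sum.cong) auto

text \<open>The part of a lazy walk lying below a level it reaches is at most a staircase
  \<open>1, 2, \<dots>, c\<close> below that level.\<close>

lemma deficit_le_tri_of_count_le:
  assumes s: "lazy_walk s m" and "count_below s m a < Suc m" "count_below s m a \<le> c"
  shows "deficit s m a \<le> int (tri c)"
  using assms(2-)
proof (induction c arbitrary: a)
  case 0
  then show ?case using deficit_eq_0 by simp
next
  case (Suc c)
  show ?case
  proof (cases "count_below s m a = 0")
    case True
    then show ?thesis using deficit_eq_0 by simp
  next
    case False
    obtain i j where "i \<le> m" "s i \<le> a - 1" "j \<le> m" "a - 1 \<le> s j"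
      using False Suc.prems(1) unfolding count_below_less_iff by (force simp: count_below_pos_iff)
    then have "count_below s m (a - 1) < count_below s m a"
      using count_below_less_succ[OF s, of i j "a - 1"] by simp
    then have "deficit s m (a - 1) \<le> int (tri c)"
      using Suc.IH[of "a - 1"] Suc.prems by simp
    then show ?thesis using deficit_pred[of s m a] Suc.prems(2) by (simp add: tri_Suc)
  qed
qed

lemma deficit_le_tri:
  "lazy_walk s m \<Longrightarrow> count_below s m a < Suc m \<Longrightarrow> deficit s m a \<le> int (tri (count_below s m a))"
  using deficit_le_tri_of_count_le by blast

lemma excess_le_tri:
  "lazy_walk s m \<Longrightarrow> count_above s m b < Suc m \<Longrightarrow> excess s m b \<le> int (tri (count_above s m b))"
  unfolding excess_eq_deficit_uminus count_above_eq_count_below_uminus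
  by (intro deficit_le_tri lazy_walk_uminus)

lemma flow_cost_le_tri:
  assumes "lazy_walk s m" "count_below s m a < Suc m" "count_above s m a < Suc m"
  shows "flow_cost s m a \<le> int (tri (count_below s m a)) + int (tri (count_above s m a))"
  using deficit_le_tri[OF assms(1,2)] excess_le_tri[OF assms(1,3)] flow_cost_split[of s m a] by simp

lemma flow_cost_le_tri_complement:
  assumes s: "lazy_walk s m" and "0 < count_below s m a" "count_below s m a < Suc m"
  shows "flow_cost s m a \<le> int (tri (count_below s m a)) + int (tri (m - count_below s m a))"
proof -
  obtain i j where "i \<le> m" "j \<le> m" "s i \<le> a" "a \<le> s j"
    using assms(2,3) unfolding count_below_pos_iff count_below_less_iff by force
  then have "count_below s m a < count_below s m (a + 1)" by (rule count_below_less_succ[OF s])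
  then have "count_above s m a \<le> m - count_below s m a"
    using count_below_succ_add_count_above[of s m a] by simp
  moreover have "count_above s m a < Suc m" using calculation by simp
  ultimately show ?thesis
    using flow_cost_le_tri[OF s assms(3)] tri_mono[of "count_above s m a"] by fastforce
qed

lemma flow_cost_le_tri_complement_above:
  assumes "lazy_walk s m" "0 < count_above s m b" "count_above s m b < Suc m"
  shows "flow_cost s m b \<le> int (tri (count_above s m b)) + int (tri (m - count_above s m b))"
  using flow_cost_le_tri_complement[OF lazy_walk_uminus[OF assms(1)], of "- b"] assms(2,3)
  unfolding count_above_eq_count_below_uminus flow_cost_uminus by simp

lemma count_below_grow:
  assumes s: "lazy_walk s m" and pos: "0 < count_below s m a"
  shows "min (count_below s m a + d) (Suc m) \<le> count_below s m (a + int d)"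
proof (induction d)
  case (Suc d)
  show ?case
  proof (cases "count_below s m (a + int d) < Suc m")
    case True
    obtain i j where "i \<le> m" "j \<le> m" "s i \<le> a + int d" "a + int d \<le> s j"
      using pos True unfolding count_below_pos_iff count_below_less_iff by force
    then have "count_below s m (a + int d) < count_below s m (a + int d + 1)"
      by (rule count_below_less_succ[OF s])
    moreover have "a + int (Suc d) = a + int d + 1" by simp
    ultimately show ?thesis using Suc.IH by (auto simp: ac_simps)
  next
    case False
    then have "Suc m \<le> count_below s m (a + int (Suc d))"
      using count_below_mono[of "a + int d" "a + int (Suc d)" s m] by simp
    then show ?thesis by simp
  qed
qed simp

lemma sum_staircase:
  fixes k :: int
  shows "(\<Sum>i<T. if int i < k then 2 * int i + 2 - k else 1)
       = (if int T \<le> k then int T * (int T + 1 - k) else int T)"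
  by (induction T) (auto simp: algebra_simps)

text \<open>Once more than \<open>(m + 1 - T) / 2\<close> of the walk lies below \<open>a\<close>, continuity of the walk
  makes the cost grow by at least one per unit step on \<open>[a, a + T]\<close>.\<close>

lemma flow_cost_increase:
  assumes s: "lazy_walk s m" and pos: "0 < count_below s m a"
    and big: "Suc m \<le> T + 2 * count_below s m a"
  shows "flow_cost s m a + int T \<le> flow_cost s m (a + int T)"
proof -
  define c where "c = count_below s m a"
  define k where "k = int (Suc m) - 2 * int c"
  have step: "(if int i < k then 2 * int i + 2 - k else 1)
      \<le> 2 * int (count_below s m (a + int i + 1)) - int (Suc m)" for i
  proof -
    have "a + int (Suc i) = a + int i + 1" by simp
    then have "min (c + Suc i) (Suc m) \<le> count_below s m (a + int i + 1)"
      using count_below_grow[OF s pos, of "Suc i"] unfolding c_def by (simp add: ac_simps)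
    then show ?thesis unfolding k_def by (cases "c + Suc i \<le> Suc m") auto
  qed
  have "k \<le> int T" using big unfolding k_def c_def by simp
  then have "int T = (\<Sum>i<T. if int i < k then 2 * int i + 2 - k else 1)"
    unfolding sum_staircase by (cases "int T = k") auto
  also have "\<dots> \<le> (\<Sum>i<T. 2 * int (count_below s m (a + int i + 1)) - int (Suc m))"
    by (intro sum_mono step)
  finally show ?thesis unfolding flow_cost_telescope[of s m a T] by simp
qed

lemma count_below_empty_or_small:
  assumes s: "lazy_walk s m" and "0 < T" and "flow_cost s m (a + int T) \<le> flow_cost s m a"
  shows "count_below s m a = 0 \<or> Suc T + 2 * count_below s m a \<le> Suc m"
  using flow_cost_increase[OF s, of a T] assms(2,3) by fastforce

lemma count_above_empty_or_small:
  assumes s: "lazy_walk s m" and "0 < T" and "flow_cost s m (b - int T) \<le> flow_cost s m b"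
  shows "count_above s m b = 0 \<or> Suc T + 2 * count_above s m b \<le> Suc m"
proof -
  have "flow_cost (\<lambda>j. - s j) m (- b + int T) \<le> flow_cost (\<lambda>j. - s j) m (- b)"
    using assms(3) flow_cost_uminus[of s m "b - int T"] flow_cost_uminus[of s m b] by simp
  then show ?thesis
    unfolding count_above_eq_count_below_uminus
    by (rule count_below_empty_or_small[OF lazy_walk_uminus[OF s] assms(2)])
qed

lemma flow_cost_between:
  assumes "a \<le> t" "t \<le> b" "flow_cost s m a \<le> D" "flow_cost s m b \<le> D"
  shows "flow_cost s m t \<le> D"
proof (cases "a = b")
  case False
  have pt: "(b - a) * \<bar>t - x\<bar> \<le> (b - t) * \<bar>a - x\<bar> + (t - a) * \<bar>b - x\<bar>" for x
  proof -
    have "(b - a) * \<bar>t - x\<bar> = \<bar>(b - a) * (t - x)\<bar>"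
      using assms(1,2) by (simp add: abs_mult)
    also have "(b - a) * (t - x) = (b - t) * (a - x) + (t - a) * (b - x)"
      by (simp add: algebra_simps)
    also have "\<bar>\<dots>\<bar> \<le> \<bar>(b - t) * (a - x)\<bar> + \<bar>(t - a) * (b - x)\<bar>"
      by (rule abs_triangle_ineq)
    also have "\<dots> = (b - t) * \<bar>a - x\<bar> + (t - a) * \<bar>b - x\<bar>"
      using assms(1,2) by (simp add: abs_mult)
    finally show ?thesis .
  qed
  have "(b - a) * flow_cost s m t \<le> (b - t) * flow_cost s m a + (t - a) * flow_cost s m b"
    unfolding flow_cost_def sum_distrib_left sum.distrib[symmetric] by (intro sum_mono pt)
  also have "\<dots> \<le> (b - t) * D + (t - a) * D"
    using assms by (intro add_mono mult_left_mono) auto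
  also have "\<dots> = (b - a) * D" by (simp add: algebra_simps)
  finally show ?thesis using False assms(1,2) by (simp add: mult_le_cancel_left)
qed (use assms in simp)

lemma flow_cost_residue_le:
  assumes "0 < n" "flow_cost s m a \<le> D" "flow_cost s m (a + int n - 1) \<le> D"
  shows "\<exists>t. t mod int n = r mod int n \<and> flow_cost s m t \<le> D"
proof (intro exI conjI)
  let ?t = "a + (r - a) mod int n"
  show "?t mod int n = r mod int n" by (simp add: mod_add_right_eq)
  have "(r - a) mod int n < int n" using assms(1) by simp
  then show "flow_cost s m ?t \<le> D"
    using assms(1) by (intro flow_cost_between[OF _ _ assms(2,3)]) auto
qed

lemma flow_cost_right_of:
  assumes "\<And>j. j \<le> m \<Longrightarrow> s j \<le> a" "0 \<le> d"
  shows "flow_cost s m (a + d) = flow_cost s m a + int (Suc m) * d"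
proof -
  have "\<bar>a + d - s j\<bar> = \<bar>a - s j\<bar> + d" if "j \<le> m" for j
    using assms(1)[OF that] assms(2) by simp
  then have "flow_cost s m (a + d) = (\<Sum>j\<le>m. \<bar>a - s j\<bar> + d)"
    unfolding flow_cost_def by (intro sum.cong) auto
  then show ?thesis unfolding flow_cost_def by (simp add: sum.distrib)
qed

lemma flow_cost_left_of:
  assumes "\<And>j. j \<le> m \<Longrightarrow> a + d \<le> s j" "0 \<le> d"
  shows "flow_cost s m a = flow_cost s m (a + d) + int (Suc m) * d"
proof -
  have "- s j \<le> - a - d" if "j \<le> m" for j
    using assms(1)[OF that] by simp
  then have "flow_cost (\<lambda>j. - s j) m (- a - d + d) = flow_cost (\<lambda>j. - s j) m (- a - d) + int (Suc m) * d"
    by (rule flow_cost_right_of[OF _ assms(2)])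
  then show ?thesis using flow_cost_uminus[of s m a] flow_cost_uminus[of s m "a + d"] by simp
qed

text \<open>The cost is convex and tends to infinity on both sides, so some window of length \<open>T\<close>
  straddles its minimum.\<close>

lemma flow_cost_crossing:
  assumes "0 < T"
  obtains a where "flow_cost s m (a + T) \<le> flow_cost s m a"
    "flow_cost s m (a + 1) < flow_cost s m (a + 1 + T)"
proof -
  define g where "g x = flow_cost s m (x + T) - flow_cost s m x" for x
  define lo where "lo = Min (s ` {..m}) - T"
  define hi where "hi = Max (s ` {..m})"
  have "g lo \<le> 0"
    using flow_cost_left_of[of m lo T s] assms unfolding g_def lo_def by auto
  moreover have "0 < g hi"
    using flow_cost_right_of[of m s hi T] assms unfolding g_def hi_def by auto
  moreover have "lo \<le> hi"
  proof -
    have "Min (s ` {..m}) \<le> s 0" "s 0 \<le> Max (s ` {..m})" by auto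
    then show ?thesis using assms unfolding lo_def hi_def by linarith
  qed
  ultimately obtain k where "\<forall>i\<le>k. \<not> 0 < g (lo + int i)" "0 < g (lo + int (Suc k))"
    using ex_least_nat_less[of "\<lambda>k. 0 < g (lo + int k)" "nat (hi - lo)"] by auto
  then show ?thesis using that[of "lo + int k"] unfolding g_def by (auto simp: add_ac)
qed

lemma flow_cost_median:
  assumes s: "lazy_walk s m"
  obtains a where "flow_cost s m a \<le> int (tri ((m + 1) div 2) + tri (m div 2))"
proof -
  obtain a0 where a0: "flow_cost s m (a0 + 1) \<le> flow_cost s m a0"
    "flow_cost s m (a0 + 1) < flow_cost s m (a0 + 1 + 1)"
    using flow_cost_crossing[of 1 s m] by auto
  define a where "a = a0 + 1"
  have "2 * count_below s m a \<le> Suc m"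
    using a0(1) flow_cost_step[of s m a0] unfolding a_def by simp
  moreover have "2 * count_above s m a < Suc m"
    using a0(2) flow_cost_step[of s m a] count_below_succ_add_count_above[of s m a]
    unfolding a_def by simp
  ultimately have "count_below s m a \<le> (m + 1) div 2" "count_above s m a \<le> m div 2"
    "count_below s m a < Suc m" "count_above s m a < Suc m" by auto
  then show ?thesis
    using flow_cost_le_tri[OF s, of a] tri_mono[of "count_below s m a"] tri_mono[of "count_above s m a"]
      that[of a]
    by fastforce
qed

section \<open>An upper bound for the minimal cost on a residue class\<close>

definition yoke_diam_formula :: "nat \<Rightarrow> nat \<Rightarrow> nat" where
  "yoke_diam_formula n m =
     (if n = 1 then tri ((m + 1) div 2) + tri (m div 2)
      else if m \<le> n then n * (m + 1) div 2
      else let d0 = tri ((m + n) div 2) + tri ((m - n + 1) div 2) in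
           if even (m - n) \<or> n \<le> (m + 2) div 2 then d0 else d0 + n - (m + 2) div 2)"

lemma yoke_diam_formula_short:
  assumes "2 \<le> n" "m \<le> n"
  shows "yoke_diam_formula n m = n * (m + 1) div 2"
  using assms unfolding yoke_diam_formula_def by simp

lemma yoke_diam_formula_even:
  assumes "2 \<le> n" "m = n + 2 * q"
  shows "2 * int (yoke_diam_formula n m) = int (n * Suc m) + 4 * int (tri q)"
proof -
  have "yoke_diam_formula n m = tri (n + q) + tri q"
    using assms unfolding yoke_diam_formula_def by (auto simp: Let_def tri_def algebra_simps)
  then show ?thesis using two_tri_int[of "n + q"] two_tri_int[of q] assms(2) by (simp add: algebra_simps)
qed

lemma yoke_diam_formula_odd:
  assumes "2 \<le> n" "m = n + 2 * q + 1"
  shows "tri (n + q) + tri (q + 1) \<le> yoke_diam_formula n m"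
    and "int (n * Suc m) + 4 * int (tri q) \<le> 2 * int (yoke_diam_formula n m) + 1"
proof -
  define d0 where "d0 = tri (n + q) + tri (q + 1)"
  have d0: "d0 = tri ((m + n) div 2) + tri ((m - n + 1) div 2)" using assms(2) unfolding d0_def by simp
  then show "d0 \<le> yoke_diam_formula n m"
    using assms unfolding yoke_diam_formula_def by (auto simp: Let_def)
  have "2 * int d0 = int (n * Suc m) + 4 * int (tri q) + 2 * int q + 2 - int n"
    using two_tri_int[of "n + q"] two_tri_int[of "q + 1"] two_tri_int[of q] assms(2)
    unfolding d0_def by (simp add: algebra_simps)
  moreover have "2 * int d0 + int n - 2 * int q - 2 \<le> 2 * int (yoke_diam_formula n m) + 1"
  proof (cases "n \<le> (m + 2) div 2")
    case True
    then show ?thesis using \<open>d0 \<le> yoke_diam_formula n m\<close> assms(2) by simp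
  next
    case False
    then have "yoke_diam_formula n m = d0 + n - (m + 2) div 2"
      using assms unfolding yoke_diam_formula_def d0 by (simp add: Let_def)
    then show ?thesis using False assms(2) by simp
  qed
  ultimately show "int (n * Suc m) + 4 * int (tri q) \<le> 2 * int (yoke_diam_formula n m) + 1" by linarith
qed

text \<open>The arithmetic core of the upper bound: \<open>cL\<close> and \<open>cR\<close> are the numbers of points of the walk
  strictly left and right of a window \<open>[a, a + n]\<close>, and \<open>pa\<close>, \<open>pb\<close> the costs at its ends.\<close>

lemma yoke_diam_formula_arith:
  fixes pa pb :: int
  assumes n: "2 \<le> n"
    and cL: "cL = 0 \<or> n + 2 * cL \<le> Suc m" and cR: "cR = 0 \<or> n + 2 * cR \<le> Suc m"
    and sum: "pa + pb \<le> int (n * Suc m) + 2 * int (tri cL) + 2 * int (tri cR)"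
    and extremeL: "0 < cL \<Longrightarrow> n + 2 * cL = Suc m \<Longrightarrow> pa \<le> int (tri cL + tri (m - cL))"
    and extremeR: "0 < cR \<Longrightarrow> n + 2 * cR = Suc m \<Longrightarrow> pb \<le> int (tri cR + tri (m - cR))"
  shows "pa \<le> int (yoke_diam_formula n m) \<or> pb \<le> int (yoke_diam_formula n m)"
proof -
  have tri_le: "2 * int (tri c) \<le> 2 * int (tri q)" if "n + 2 * c \<le> n + 2 * q + 1 \<or> c = 0" for c q
    using tri_mono[of c q] that by auto
  have "m \<le> n \<or> (\<exists>q. m = n + 2 * q) \<or> (\<exists>q. m = n + 2 * q + 1)" by presburger
  then consider "m \<le> n" | q where "m = n + 2 * q" | q where "m = n + 2 * q + 1" by blast
  then show ?thesis
  proof cases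
    case 1
    then have "cL = 0" "cR = 0" using cL cR by auto
    then have "pa + pb \<le> int (n * Suc m)" using sum by simp
    moreover have "n * Suc m \<le> 2 * yoke_diam_formula n m + 1"
      using yoke_diam_formula_short[OF n 1] by simp
    ultimately show ?thesis by linarith
  next
    case (2 q)
    then have "pa + pb \<le> int (n * Suc m) + 4 * int (tri q)"
      using sum tri_le[of cL q] tri_le[of cR q] cL cR by linarith
    then show ?thesis using yoke_diam_formula_even[OF n 2] by linarith
  next
    case (3 q)
    show ?thesis
    proof (cases "n + 2 * cL = Suc m \<or> n + 2 * cR = Suc m")
      case True
      have "c = q + 1 \<and> m - c = n + q" if "n + 2 * c = Suc m" for c
        using that 3 by auto
      then have "pa \<le> int (tri (q + 1) + tri (n + q)) \<or> pb \<le> int (tri (q + 1) + tri (n + q))"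
        using True extremeL extremeR by force
      then show ?thesis using yoke_diam_formula_odd(1)[OF n 3] by linarith
    next
      case False
      then have "pa + pb \<le> int (n * Suc m) + 4 * int (tri q)"
        using sum tri_le[of cL q] tri_le[of cR q] cL cR 3 by auto
      then show ?thesis using yoke_diam_formula_odd(2)[OF n 3] by linarith
    qed
  qed
qed

text \<open>For \<open>n \<ge> 2\<close> take the window \<open>[a, a + n]\<close> at which the difference \<open>cost (x + n - 1) - cost x\<close>
  changes sign; then either \<open>cost a\<close> or \<open>cost (a + n)\<close> is at most the claimed bound, and the
  corresponding half-window of length \<open>n\<close> meets every residue class.\<close>

lemma flow_cost_two_point_bound:
  assumes s: "lazy_walk s m" and n: "2 \<le> n"
  obtains a where "flow_cost s m (a + int n - 1) \<le> flow_cost s m a"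
    "flow_cost s m (a + 1) \<le> flow_cost s m (a + int n)"
    "flow_cost s m a \<le> int (yoke_diam_formula n m)
      \<or> flow_cost s m (a + int n) \<le> int (yoke_diam_formula n m)"
proof -
  define T where "T = n - 1"
  have T: "0 < T" "Suc T = n" using n unfolding T_def by auto
  obtain a where a: "flow_cost s m (a + int T) \<le> flow_cost s m a"
    "flow_cost s m (a + 1) < flow_cost s m (a + 1 + int T)"
    using flow_cost_crossing[of "int T" s m] T by auto
  have right: "a + 1 + int T = a + int n" "a + int n - int T = a + 1" "a + int T = a + int n - 1"
    using T by auto
  define cL cR where "cL = count_below s m a" and "cR = count_above s m (a + int n)"
  have hL: "cL = 0 \<or> n + 2 * cL \<le> Suc m"
    using count_below_empty_or_small[OF s T(1) a(1)] T unfolding cL_def by simp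
  have hR: "cR = 0 \<or> n + 2 * cR \<le> Suc m"
    using count_above_empty_or_small[OF s T(1), of "a + int n"] a(2) T right unfolding cR_def by simp
  have "cL < Suc m" "cR < Suc m" using hL hR n by auto
  then have "deficit s m a \<le> int (tri cL)" "excess s m (a + int n) \<le> int (tri cR)"
    using deficit_le_tri[OF s] excess_le_tri[OF s] unfolding cL_def cR_def by auto
  then have sum: "flow_cost s m a + flow_cost s m (a + int n)
      \<le> int (n * Suc m) + 2 * int (tri cL) + 2 * int (tri cR)"
    using flow_cost_pair[of "int n" s m a] by (simp add: algebra_simps)
  have "flow_cost s m a \<le> int (yoke_diam_formula n m)
      \<or> flow_cost s m (a + int n) \<le> int (yoke_diam_formula n m)"
  proof (rule yoke_diam_formula_arith[OF n hL hR sum])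
    show "flow_cost s m a \<le> int (tri cL + tri (m - cL))" if "0 < cL" "n + 2 * cL = Suc m"
      using flow_cost_le_tri_complement[OF s] that \<open>cL < Suc m\<close> unfolding cL_def by simp
    show "flow_cost s m (a + int n) \<le> int (tri cR + tri (m - cR))" if "0 < cR" "n + 2 * cR = Suc m"
      using flow_cost_le_tri_complement_above[OF s] that \<open>cR < Suc m\<close> unfolding cR_def by simp
  qed
  then show ?thesis using that a right by simp
qed

lemma yoke_diam_formula_upper:
  assumes s: "lazy_walk s m" and n: "1 \<le> n"
  shows "\<exists>t. t mod int n = r mod int n \<and> flow_cost s m t \<le> int (yoke_diam_formula n m)"
proof (cases "n = 1")
  case True
  obtain a where "flow_cost s m a \<le> int (yoke_diam_formula n m)"
    using flow_cost_median[OF s] True unfolding yoke_diam_formula_def by auto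
  then show ?thesis using True by auto
next
  case False
  with n have "2 \<le> n" by simp
  obtain a where a: "flow_cost s m (a + int n - 1) \<le> flow_cost s m a"
    "flow_cost s m (a + 1) \<le> flow_cost s m (a + int n)"
    "flow_cost s m a \<le> int (yoke_diam_formula n m)
      \<or> flow_cost s m (a + int n) \<le> int (yoke_diam_formula n m)"
    by (rule flow_cost_two_point_bound[OF s \<open>2 \<le> n\<close>])
  from a(3) show ?thesis
  proof
    assume "flow_cost s m a \<le> int (yoke_diam_formula n m)"
    then show ?thesis using flow_cost_residue_le[of n s m a] a(1) n by auto
  next
    assume "flow_cost s m (a + int n) \<le> int (yoke_diam_formula n m)"
    then show ?thesis using flow_cost_residue_le[of n s m "a + 1"] a(2) n by auto
  qed
qed

section \<open>Walks attaining the bound\<close>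

lemma mod_eq_imp_le_or_ge:
  assumes "t mod int n = p mod int n"
  shows "t \<le> p \<or> p + int n \<le> t"
proof -
  obtain q where q: "t - p = int n * q" using assms by (metis mod_eq_dvd_iff dvd_def)
  show ?thesis
  proof (cases "q \<le> 0")
    case True
    then have "int n * q \<le> 0" by (simp add: mult_nonneg_nonpos)
    then show ?thesis using q by simp
  next
    case False
    then have "int n * 1 \<le> int n * q" by (intro mult_left_mono) auto
    then show ?thesis using q by simp
  qed
qed

lemma flow_cost_ge_abs_sum: "\<bar>int (Suc m) * t - (\<Sum>j\<le>m. s j)\<bar> \<le> flow_cost s m t"
proof -
  have "int (Suc m) * t - (\<Sum>j\<le>m. s j) = (\<Sum>j\<le>m. t - s j)" by (simp add: sum_subtractf)
  then show ?thesis unfolding flow_cost_def by (metis sum_abs)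
qed

lemma flow_cost_int_last: "flow_cost int t (int t) = int (tri t)"
proof (induction t)
  case (Suc t)
  have "flow_cost int (Suc t) (int (Suc t)) = (\<Sum>j\<le>t. (int t - int j) + 1)"
    unfolding flow_cost_def by (simp add: sum.atMost_Suc algebra_simps)
  also have "\<dots> = (\<Sum>j\<le>t. \<bar>int t - int j\<bar>) + (\<Sum>j\<le>t. 1)"
    unfolding sum.distrib[symmetric] by (intro sum.cong) auto
  finally show ?case using Suc unfolding flow_cost_def by (simp add: tri_Suc)
qed (simp add: flow_cost_def)

lemma flow_cost_int:
  assumes "t \<le> M"
  shows "flow_cost int M (int t) = int (tri t + tri (M - t))"
  using assms
proof (induction M)
  case (Suc M)
  show ?case
  proof (cases "t = Suc M")
    case True
    then show ?thesis using flow_cost_int_last[of t] by simp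
  next
    case False
    then have "t \<le> M" using Suc.prems by simp
    then have "flow_cost int (Suc M) (int t) = int (tri t + tri (M - t)) + int (Suc (M - t))"
      using Suc.IH by (simp add: flow_cost_def sum.atMost_Suc)
    then show ?thesis using \<open>t \<le> M\<close> by (simp add: Suc_diff_le tri_Suc)
  qed
qed (simp add: flow_cost_def)

text \<open>\<open>tri x + tri (M - x)\<close> is a convex function of \<open>x\<close>, symmetric about \<open>M / 2\<close>.\<close>

lemma tri_pair_ge:
  assumes "2 * p \<le> M" "x \<le> M" "x \<le> p \<or> M - p \<le> x"
  shows "tri p + tri (M - p) \<le> tri x + tri (M - x)"
proof -
  have "2 * int (tri x + tri (M - x)) - 2 * int (tri p + tri (M - p))
      = 2 * ((int x - int p) * (int x + int p - int M))"
    using two_tri_int[of x] two_tri_int[of "M - x"] two_tri_int[of p] two_tri_int[of "M - p"] assms(1,2)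
    by (simp add: algebra_simps of_nat_diff)
  moreover have "0 \<le> (int x - int p) * (int x + int p - int M)"
    using assms by (auto intro: mult_nonpos_nonpos)
  ultimately have "0 \<le> 2 * int (tri x + tri (M - x)) - 2 * int (tri p + tri (M - p))" by simp
  then show ?thesis by simp
qed

lemma flow_cost_int_ge:
  assumes "2 * p \<le> M" "t \<le> int p \<or> int (M - p) \<le> t"
  shows "int (tri p + tri (M - p)) \<le> flow_cost int M t"
proof -
  have tri_le: "int (tri p + tri (M - p)) \<le> int (tri x + tri (M - x))"
    if "x \<le> M" "x \<le> p \<or> M - p \<le> x" for x
    using tri_pair_ge[OF assms(1) that] by simp
  consider "t < 0" | x where "t = int x" "x \<le> M" | "int M < t"
    by (metis nonneg_int_cases not_le of_nat_le_iff)
  then show ?thesis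
  proof cases
    case 1
    have "flow_cost int M (int 0) \<le> flow_cost int M t"
      unfolding flow_cost_def using 1 by (intro sum_mono) auto
    then show ?thesis using flow_cost_int[of 0 M] tri_le[of 0] by simp
  next
    case (2 x)
    then have "x \<le> p \<or> M - p \<le> x" using assms(2) by auto
    then show ?thesis using flow_cost_int[of x M] tri_le[of x] 2 by simp
  next
    case 3
    have "flow_cost int M (int M) \<le> flow_cost int M t"
      unfolding flow_cost_def using 3 by (intro sum_mono) auto
    then show ?thesis using flow_cost_int[of M M] tri_le[of M] by simp
  qed
qed

lemma flow_cost_id_walk_ge:
  assumes "2 * p \<le> m" "m \<le> 2 * p + n" "t mod int n = int p mod int n"
  shows "int (tri p + tri (m - p)) \<le> flow_cost int m t"
proof (rule flow_cost_int_ge[OF assms(1)])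
  show "t \<le> int p \<or> int (m - p) \<le> t"
    using mod_eq_imp_le_or_ge[OF assms(3)] assms(1,2) by auto
qed

lemma flow_cost_zero_walk_ge:
  assumes "t mod int (2 * h) = int h mod int (2 * h)"
  shows "int (h * Suc m) \<le> flow_cost (\<lambda>_. 0) m t"
proof -
  have "(int h - int (2 * h)) mod int (2 * h) = int h mod int (2 * h)"
    by (metis diff_add_cancel mod_add_self2)
  then have "t \<le> - int h \<or> int h \<le> t"
    using mod_eq_imp_le_or_ge[of t "2 * h" "int h - int (2 * h)"] assms by auto
  then have "int (Suc m) * int h \<le> int (Suc m) * \<bar>t\<bar>" by (intro mult_left_mono) auto
  then show ?thesis unfolding flow_cost_def by (simp add: algebra_simps)
qed

lemma flow_cost_step_walk_ge:
  assumes "t mod int (2 * h + 1) = int (h + 1) mod int (2 * h + 1)"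
  shows "int (h * Suc m + (m + 1) div 2) \<le> flow_cost (\<lambda>l. of_bool (m div 2 < l)) m t"
proof -
  define c where "c = (m + 1) div 2"
  have "(\<Sum>l\<le>m. of_bool (m div 2 < l) :: int) = int (card {m div 2<..m})"
    by (simp add: Int_def conj_commute greaterThanAtMost_def)
  then have "\<bar>int (Suc m) * t - int c\<bar> \<le> flow_cost (\<lambda>l. of_bool (m div 2 < l)) m t"
    using flow_cost_ge_abs_sum[of m t "\<lambda>l. of_bool (m div 2 < l)"] unfolding c_def by simp
  moreover have "int (h + 1) = - int h + int (2 * h + 1)" by simp
  then have "(- int h) mod int (2 * h + 1) = int (h + 1) mod int (2 * h + 1)"
    by (metis mod_add_self2)
  then have "t \<le> - int h \<or> int h + 1 \<le> t"
    using mod_eq_imp_le_or_ge[of t "2 * h + 1" "- int h"] assms by auto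
  then have "int (h * Suc m + c) \<le> \<bar>int (Suc m) * t - int c\<bar>"
  proof
    assume "t \<le> - int h"
    then have "int (Suc m) * t \<le> int (Suc m) * (- int h)" by (intro mult_left_mono) auto
    then show ?thesis by (simp add: algebra_simps)
  next
    assume "int h + 1 \<le> t"
    then have "int (Suc m) * (int h + 1) \<le> int (Suc m) * t" by (intro mult_left_mono) auto
    moreover have "2 * c \<le> Suc m" unfolding c_def by simp
    ultimately show ?thesis by (simp add: algebra_simps)
  qed
  ultimately show ?thesis unfolding c_def by linarith
qed

lemma flow_cost_skip_walk:
  assumes "k < m"
  shows "flow_cost (\<lambda>l. int l - of_bool (k < l)) m t = flow_cost int (m - 1) t + \<bar>t - int k\<bar>"
  using assms
proof (induction m)
  case (Suc m)
  show ?case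
  proof (cases "k = m")
    case True
    have "flow_cost (\<lambda>l. int l - of_bool (k < l)) m t = flow_cost int m t"
      unfolding flow_cost_def using True by (intro sum.cong) auto
    then show ?thesis using True by (simp add: flow_cost_def)
  next
    case False
    then have "k < m" using Suc.prems by simp
    then show ?thesis using Suc.IH by (cases m) (simp_all add: flow_cost_def)
  qed
qed simp

lemma flow_cost_skip_walk_ge:
  assumes "m = n + 2 * r + 1" "t mod int n = int r mod int n"
  shows "int (tri r + tri (n + r) + (r + n - m div 2))
      \<le> flow_cost (\<lambda>l. int l - of_bool (m div 2 < l)) m t"
proof -
  have "t \<le> int r \<or> int r + int n \<le> t" by (rule mod_eq_imp_le_or_ge[OF assms(2)])
  moreover have "m - 1 - r = n + r" using assms(1) by simp
  ultimately have "int (tri r + tri (n + r)) \<le> flow_cost int (m - 1) t"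
    using flow_cost_int_ge[of r "m - 1" t] assms(1) by (auto simp: add.commute)
  moreover have "int (r + n - m div 2) \<le> \<bar>t - int (m div 2)\<bar>"
    using \<open>t \<le> int r \<or> int r + int n \<le> t\<close> assms(1) by auto
  ultimately show ?thesis using flow_cost_skip_walk[of "m div 2" m t] assms(1) by simp
qed

lemma sum_lessThan_indicator: "(\<Sum>i<l. of_bool (i = k) :: int) = of_bool (k < (l :: nat))"
  by (induction l) auto

lemma yoke_diam_formula_lower_one:
  obtains g :: "nat \<Rightarrow> int" and r where "\<And>i. g i \<in> {0, 1}"
    "\<And>t. t mod int 1 = r mod int 1 \<Longrightarrow> int (yoke_diam_formula 1 m) \<le> flow_cost (\<lambda>l. \<Sum>i<l. g i) m t"
proof -
  define k where "k = m div 2"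
  have "(m + 1) div 2 = m - k" unfolding k_def by presburger
  then have "yoke_diam_formula 1 m = tri k + tri (m - k)"
    unfolding yoke_diam_formula_def k_def by simp
  then show ?thesis
    using that[of "\<lambda>_. 1" "int k"] flow_cost_id_walk_ge[of k m 1] unfolding k_def by simp
qed

lemma yoke_diam_formula_lower_short:
  assumes "2 \<le> n" "m \<le> n"
  obtains g :: "nat \<Rightarrow> int" and r where "\<And>i. g i \<in> {0, 1}"
    "\<And>t. t mod int n = r mod int n \<Longrightarrow> int (yoke_diam_formula n m) \<le> flow_cost (\<lambda>l. \<Sum>i<l. g i) m t"
proof (cases "even n")
  case True
  then obtain h where h: "n = 2 * h" by blast
  then have "yoke_diam_formula n m = h * Suc m" using yoke_diam_formula_short[OF assms] by simp
  then show ?thesis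
    using that[of "\<lambda>_. 0" "int h"] flow_cost_zero_walk_ge[of _ h m] h by simp
next
  case False
  then obtain h where h: "n = 2 * h + 1" using oddE by blast
  then have "yoke_diam_formula n m = h * Suc m + (m + 1) div 2"
    using yoke_diam_formula_short[OF assms] by simp
  then show ?thesis
    using that[of "\<lambda>i. of_bool (i = m div 2)" "int (h + 1)"] flow_cost_step_walk_ge[of _ h m] h
    by (simp add: sum_lessThan_indicator)
qed

lemma yoke_diam_formula_lower_long:
  assumes "2 \<le> n" "n < m"
  obtains g :: "nat \<Rightarrow> int" and r where "\<And>i. g i \<in> {0, 1}"
    "\<And>t. t mod int n = r mod int n \<Longrightarrow> int (yoke_diam_formula n m) \<le> flow_cost (\<lambda>l. \<Sum>i<l. g i) m t"
proof (cases "even (m - n) \<or> n \<le> (m + 2) div 2")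
  case True
  define p where "p = (m - n + 1) div 2"
  have "(m + n) div 2 = m - p" using assms unfolding p_def by linarith
  then have "yoke_diam_formula n m = tri p + tri (m - p)"
    using assms True unfolding yoke_diam_formula_def p_def by (simp add: Let_def)
  then show ?thesis
    using that[of "\<lambda>_. 1" "int p"] flow_cost_id_walk_ge[of p m n] assms unfolding p_def by simp
next
  case False
  define r where "r = (m - n) div 2"
  have m: "m = n + 2 * r + 1" using False assms unfolding r_def by presburger
  have "yoke_diam_formula n m = tri (n + r) + tri (r + 1) + n - (m div 2 + 1)"
    using False assms m unfolding yoke_diam_formula_def by (simp add: Let_def)
  then have "yoke_diam_formula n m = tri r + tri (n + r) + (r + n - m div 2)"
    using False m by (simp add: tri_Suc)
  then show ?thesis
    using that[of "\<lambda>i. 1 - of_bool (i = m div 2)" "int r"] flow_cost_skip_walk_ge[OF m]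
    by (simp add: sum_subtractf sum_lessThan_indicator)
qed

lemma yoke_diam_formula_lower:
  assumes "1 \<le> n"
  obtains g :: "nat \<Rightarrow> int" and r where "\<And>i. g i \<in> {0, 1}"
    "\<And>t. t mod int n = r mod int n \<Longrightarrow> int (yoke_diam_formula n m) \<le> flow_cost (\<lambda>l. \<Sum>i<l. g i) m t"
proof -
  consider "n = 1" | "2 \<le> n" "m \<le> n" | "2 \<le> n" "n < m" using assms by linarith
  then show ?thesis
    using yoke_diam_formula_lower_one yoke_diam_formula_lower_short yoke_diam_formula_lower_long that
    by cases metis+
qed

section \<open>Distances in the Yoke graph as flow costs\<close>

definition gain :: "int list \<Rightarrow> int list \<Rightarrow> nat \<Rightarrow> int" where
  "gain v w l = (\<Sum>i = 1..l. w ! i - v ! i)"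

lemma gain_0 [simp]: "gain v w 0 = 0"
  unfolding gain_def by simp

lemma gain_Suc: "gain v w (Suc l) = gain v w l + (w ! Suc l - v ! Suc l)"
  unfolding gain_def by simp

lemma gain_trans: "gain u v l + gain v w l = gain u w l"
  unfolding gain_def sum.distrib[symmetric] by simp

lemma gain_swap: "gain w v l = - gain v w l"
  unfolding gain_def by (simp add: sum_negf[symmetric])

lemma yoke_vertex_length: "v \<in> yoke_vertices n m \<Longrightarrow> length v = m + 2"
  unfolding yoke_vertices_def by simp

lemma yoke_vertex_bit:
  assumes "v \<in> yoke_vertices n m" "1 \<le> i" "i \<le> m"
  shows "v ! i = 0 \<or> v ! i = 1"
proof -
  have "\<not> is_bucket m i" "i < m + 2" using assms(2,3) by (auto simp: is_bucket_def)
  then show ?thesis using assms(1) unfolding yoke_vertices_def by fastforce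
qed

lemma yoke_vertex_bucket:
  assumes "v \<in> yoke_vertices n m" "j = 0 \<or> j = Suc m"
  shows "0 \<le> v ! j \<and> v ! j < int n"
  using assms unfolding yoke_vertices_def is_bucket_def by auto

lemma yoke_vertex_sum: "v \<in> yoke_vertices n m \<Longrightarrow> int n dvd sum_list v"
  unfolding yoke_vertices_def by auto

lemma lazy_walk_gain:
  assumes "v \<in> yoke_vertices n m" "w \<in> yoke_vertices n m"
  shows "lazy_walk (gain v w) m"
proof -
  have "\<bar>w ! Suc j - v ! Suc j\<bar> \<le> 1" if "j < m" for j
    using yoke_vertex_bit[OF assms(1), of "Suc j"] yoke_vertex_bit[OF assms(2), of "Suc j"] that by auto
  then show ?thesis unfolding lazy_walk_def gain_Suc by simp
qed

text \<open>A chip moving across edge \<open>j\<close> (from position \<open>j\<close> to \<open>j + 1\<close> for \<open>\<delta> = -1\<close>) changes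
  the gain only at \<open>l = j\<close>, or for all \<open>l \<ge> 1\<close> when it leaves the first bucket.\<close>

lemma gain_edge:
  assumes "\<And>i. 1 \<le> i \<Longrightarrow> i \<le> m \<Longrightarrow> w ! i = y ! i + \<delta> * (of_bool (i = j) - of_bool (i = Suc j))"
    and "l \<le> m"
  shows "gain y w l = \<delta> * (of_bool (1 \<le> j \<and> j \<le> l) - of_bool (j < l))"
  using assms(2)
proof (induction l)
  case (Suc l)
  have "w ! Suc l - y ! Suc l = \<delta> * (of_bool (Suc l = j) - of_bool (l = j))"
    using assms(1)[of "Suc l"] Suc.prems by simp
  moreover have "of_bool (1 \<le> j \<and> j \<le> Suc l) - of_bool (j < Suc l)
      = of_bool (1 \<le> j \<and> j \<le> l) - of_bool (j < l) + (of_bool (Suc l = j) - of_bool (l = j) :: int)"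
    by auto
  ultimately show ?case using Suc by (simp add: gain_Suc distrib_left)
qed simp

lemma entry_eq_flip:
  "entry_eq n m j a (b + 1) \<longleftrightarrow> entry_eq n m j b (a - 1)"
  "entry_eq n m j a (b - 1) \<longleftrightarrow> entry_eq n m j b (a + 1)"
  unfolding entry_eq_def mod_eq_dvd_iff by (auto simp: algebra_simps dvd_diff_commute)

lemma yoke_adj_sym:
  assumes "yoke_adj n m u v"
  shows "yoke_adj n m v u"
proof -
  obtain i where i: "i \<le> m" "\<forall>j<m + 2. j \<noteq> i \<and> j \<noteq> i + 1 \<longrightarrow> u ! j = v ! j"
    "(entry_eq n m i (u ! i) (v ! i + 1) \<and> entry_eq n m (i + 1) (u ! (i + 1)) (v ! (i + 1) - 1)) \<or>
     (entry_eq n m i (u ! i) (v ! i - 1) \<and> entry_eq n m (i + 1) (u ! (i + 1)) (v ! (i + 1) + 1))"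
    using assms unfolding yoke_adj_def by blast
  have "\<forall>j<m + 2. j \<noteq> i \<and> j \<noteq> i + 1 \<longrightarrow> v ! j = u ! j" using i(2) by auto
  moreover have
    "(entry_eq n m i (v ! i) (u ! i + 1) \<and> entry_eq n m (i + 1) (v ! (i + 1)) (u ! (i + 1) - 1)) \<or>
     (entry_eq n m i (v ! i) (u ! i - 1) \<and> entry_eq n m (i + 1) (v ! (i + 1)) (u ! (i + 1) + 1))"
    using i(3) entry_eq_flip by blast
  moreover have "u \<in> yoke_vertices n m" "v \<in> yoke_vertices n m" "v \<noteq> u"
    using assms unfolding yoke_adj_def by auto
  ultimately show ?thesis using i(1) unfolding yoke_adj_def by blast
qed

lemma entry_eq_interior: "1 \<le> p \<Longrightarrow> p \<le> m \<Longrightarrow> entry_eq n m p a b \<longleftrightarrow> a = b"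
  unfolding entry_eq_def is_bucket_def by simp

lemma entry_eq_first: "entry_eq n m 0 a b \<longleftrightarrow> a mod int n = b mod int n"
  unfolding entry_eq_def is_bucket_def by simp

text \<open>\<open>w'\<close> arises from \<open>w\<close> by moving a chip across edge \<open>i\<close>: from position \<open>i + 1\<close> to \<open>i\<close> if
  \<open>\<delta> = 1\<close>, and from \<open>i\<close> to \<open>i + 1\<close> if \<open>\<delta> = -1\<close>.\<close>

definition chip_moved :: "nat \<Rightarrow> nat \<Rightarrow> nat \<Rightarrow> int \<Rightarrow> int list \<Rightarrow> int list \<Rightarrow> bool" where
  "chip_moved n m i \<delta> w w' \<longleftrightarrow>
     (\<forall>p<m + 2. entry_eq n m p (w' ! p) (w ! p + \<delta> * (of_bool (p = i) - of_bool (p = Suc i))))"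

lemma chip_movedD:
  "chip_moved n m i \<delta> w w' \<Longrightarrow> p < m + 2 \<Longrightarrow>
     entry_eq n m p (w' ! p) (w ! p + \<delta> * (of_bool (p = i) - of_bool (p = Suc i)))"
  unfolding chip_moved_def by blast

lemma chip_moved_interior:
  "chip_moved n m i \<delta> w w' \<Longrightarrow> 1 \<le> p \<Longrightarrow> p \<le> m \<Longrightarrow>
     w' ! p = w ! p + \<delta> * (of_bool (p = i) - of_bool (p = Suc i))"
  using chip_movedD[of n m i \<delta> w w' p] by (simp add: entry_eq_interior)

lemma yoke_adjE:
  assumes "yoke_adj n m y w"
  obtains i and \<delta> :: int where "i \<le> m" "\<delta> = 1 \<or> \<delta> = -1" "chip_moved n m i \<delta> y w"
proof -
  obtain i where i: "i \<le> m" "\<forall>p<m + 2. p \<noteq> i \<and> p \<noteq> i + 1 \<longrightarrow> y ! p = w ! p"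
    "(entry_eq n m i (y ! i) (w ! i + 1) \<and> entry_eq n m (i + 1) (y ! (i + 1)) (w ! (i + 1) - 1)) \<or>
     (entry_eq n m i (y ! i) (w ! i - 1) \<and> entry_eq n m (i + 1) (y ! (i + 1)) (w ! (i + 1) + 1))"
    using assms unfolding yoke_adj_def by blast
  obtain \<delta> :: int where \<delta>: "\<delta> = 1 \<or> \<delta> = -1"
    "entry_eq n m i (w ! i) (y ! i + \<delta>)" "entry_eq n m (Suc i) (w ! Suc i) (y ! Suc i - \<delta>)"
  proof (rule disjE[OF i(3)])
    assume "entry_eq n m i (y ! i) (w ! i + 1) \<and> entry_eq n m (i + 1) (y ! (i + 1)) (w ! (i + 1) - 1)"
    then have "entry_eq n m i (w ! i) (y ! i + - 1)" "entry_eq n m (Suc i) (w ! Suc i) (y ! Suc i - - 1)"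
      using entry_eq_flip(1)[of n m i "y ! i"] entry_eq_flip(2)[of n m "Suc i" "y ! Suc i"] by simp_all
    then show thesis using that by blast
  next
    assume "entry_eq n m i (y ! i) (w ! i - 1) \<and> entry_eq n m (i + 1) (y ! (i + 1)) (w ! (i + 1) + 1)"
    then have "entry_eq n m i (w ! i) (y ! i + 1)" "entry_eq n m (Suc i) (w ! Suc i) (y ! Suc i - 1)"
      using entry_eq_flip(2)[of n m i "y ! i"] entry_eq_flip(1)[of n m "Suc i" "y ! Suc i"] by simp_all
    then show thesis using that by blast
  qed
  have "chip_moved n m i \<delta> y w"
    unfolding chip_moved_def using \<delta> i(2) by (auto simp: entry_eq_def)
  then show ?thesis using that i(1) \<delta>(1) by blast
qed

lemma flow_cost_update:
  assumes "i \<le> m" "\<And>l. l \<le> m \<Longrightarrow> t' - s' l = t - s l - \<delta> * of_bool (l = i)"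
  shows "flow_cost s' m t' = flow_cost s m t - \<bar>t - s i\<bar> + \<bar>t - s i - \<delta>\<bar>"
proof -
  have "flow_cost s' m t' = \<bar>t' - s' i\<bar> + (\<Sum>l\<in>{..m} - {i}. \<bar>t' - s' l\<bar>)"
    unfolding flow_cost_def using assms(1) by (simp add: sum.remove)
  also have "(\<Sum>l\<in>{..m} - {i}. \<bar>t' - s' l\<bar>) = (\<Sum>l\<in>{..m} - {i}. \<bar>t - s l\<bar>)"
    using assms(2) by (intro sum.cong) auto
  also have "\<dots> = flow_cost s m t - \<bar>t - s i\<bar>"
    unfolding flow_cost_def using assms(1) by (simp add: sum.remove)
  finally show ?thesis using assms by simp
qed

text \<open>After correcting \<open>t\<close> for a chip leaving or entering the first bucket, moving a chip across
  edge \<open>i\<close> changes only the flow through that edge.\<close>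

lemma flow_edge_move:
  assumes i: "i \<le> m"
    and moved: "chip_moved n m i \<delta> w w'"
  shows "(t - \<delta> * of_bool (i = 0)) mod int n = (v ! 0 - w' ! 0) mod int n
           \<longleftrightarrow> t mod int n = (v ! 0 - w ! 0) mod int n"
    and "l \<le> m \<Longrightarrow> (t - \<delta> * of_bool (i = 0)) - gain v w' l = t - gain v w l - \<delta> * of_bool (l = i)"
proof -
  have d: "int n dvd (w' ! 0 - w ! 0 - \<delta> * of_bool (i = 0))"
    using chip_movedD[OF moved, of 0] by (simp add: entry_eq_first mod_eq_dvd_iff algebra_simps)
  have "(t - \<delta> * of_bool (i = 0)) - (v ! 0 - w' ! 0)
      = (t - (v ! 0 - w ! 0)) + (w' ! 0 - w ! 0 - \<delta> * of_bool (i = 0))"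
    by simp
  then show "(t - \<delta> * of_bool (i = 0)) mod int n = (v ! 0 - w' ! 0) mod int n
      \<longleftrightarrow> t mod int n = (v ! 0 - w ! 0) mod int n"
    unfolding mod_eq_dvd_iff by (simp only: dvd_add_left_iff[OF d])
next
  assume "l \<le> m"
  have "gain w w' l = \<delta> * (of_bool (1 \<le> i \<and> i \<le> l) - of_bool (i < l))"
    using chip_moved_interior[OF moved] \<open>l \<le> m\<close> by (rule gain_edge)
  moreover have "\<delta> * (of_bool (1 \<le> i \<and> i \<le> l) - of_bool (i < l)) + \<delta> * of_bool (i = 0)
      = \<delta> * of_bool (l = i)"
    unfolding distrib_left[symmetric] by (rule arg_cong[of _ _ "(*) \<delta>"]) auto
  ultimately show "(t - \<delta> * of_bool (i = 0)) - gain v w' l = t - gain v w l - \<delta> * of_bool (l = i)"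
    using gain_trans[of v w l w'] by linarith
qed

text \<open>Distances are bounded below by the cost of the gain walk: each edge changes the
  flow through a single edge of the path by one.\<close>

lemma yoke_path_flow_cost:
  assumes "(v, w) \<in> yoke_edges n m ^^ k"
  shows "\<exists>t. t mod int n = (v ! 0 - w ! 0) mod int n \<and> flow_cost (gain v w) m t \<le> int k"
  using assms
proof (induction k arbitrary: w)
  case 0
  then show ?case by (intro exI[of _ 0]) (simp add: flow_cost_def gain_def)
next
  case (Suc k)
  then obtain y where y: "(v, y) \<in> yoke_edges n m ^^ k" "yoke_adj n m y w"
    unfolding yoke_edges_def by auto
  obtain t where t: "t mod int n = (v ! 0 - y ! 0) mod int n" "flow_cost (gain v y) m t \<le> int k"
    using Suc.IH[OF y(1)] by blast
  obtain i and \<delta> :: int where i: "i \<le> m" "\<delta> = 1 \<or> \<delta> = -1" "chip_moved n m i \<delta> y w"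
    using yoke_adjE[OF y(2)] by blast
  define t' where "t' = t - \<delta> * of_bool (i = 0)"
  have "flow_cost (gain v w) m t'
      = flow_cost (gain v y) m t - \<bar>t - gain v y i\<bar> + \<bar>t - gain v y i - \<delta>\<bar>"
    using flow_edge_move(2)[OF i(1,3)] unfolding t'_def by (rule flow_cost_update[OF i(1)])
  then have "flow_cost (gain v w) m t' \<le> int (Suc k)"
    using abs_triangle_ineq4[of "t - gain v y i" \<delta>] i(2) t(2) by auto
  moreover have "t' mod int n = (v ! 0 - w ! 0) mod int n"
    using flow_edge_move(1)[OF i(1,3)] t(1) unfolding t'_def by blast
  ultimately show ?case by blast
qed

lemma flow_cost_gain_swap: "flow_cost (gain w v) m (- t) = flow_cost (gain v w) m t"
  unfolding flow_cost_def gain_swap[of w v] by (intro sum.cong) auto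

lemma yoke_vertex_eqI:
  assumes "v \<in> yoke_vertices n m" "w \<in> yoke_vertices n m" "p < m + 2" "entry_eq n m p (v ! p) (w ! p)"
  shows "v ! p = w ! p"
proof (cases "is_bucket m p")
  case True
  then have "0 \<le> v ! p \<and> v ! p < int n" "0 \<le> w ! p \<and> w ! p < int n"
    using yoke_vertex_bucket[OF assms(1)] yoke_vertex_bucket[OF assms(2)] unfolding is_bucket_def by auto
  then show ?thesis using True assms(4) unfolding entry_eq_def by simp
qed (use assms(4) in \<open>simp add: entry_eq_def\<close>)

lemma sum_list_yoke_vertex:
  assumes "v \<in> yoke_vertices n m"
  shows "sum_list v = (\<Sum>i\<le>m. v ! i) + v ! Suc m"
  using yoke_vertex_length[OF assms]
  by (simp add: sum_list_sum_nth lessThan_Suc_atMost[symmetric] atLeast0LessThan)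

text \<open>Cost zero forces all flows to vanish, so the interiors and the first bucket agree;
  the last bucket is then determined by the sum condition.\<close>

lemma flow_cost_zero_imp_eq:
  assumes V: "v \<in> yoke_vertices n m" "w \<in> yoke_vertices n m"
    and res: "t mod int n = (v ! 0 - w ! 0) mod int n" and zero: "flow_cost (gain v w) m t = 0"
  shows "v = w"
proof -
  have flat: "t = gain v w l" if "l \<le> m" for l
    using zero that unfolding flow_cost_def by (subst (asm) sum_nonneg_eq_0_iff) auto
  then have "entry_eq n m 0 (v ! 0) (w ! 0)"
    using res flat[of 0] by (simp add: entry_eq_first mod_eq_dvd_iff dvd_eq_mod_eq_0)
  then have "v ! 0 = w ! 0" using V by (intro yoke_vertex_eqI) auto
  moreover have "v ! Suc l = w ! Suc l" if "l < m" for l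
    using flat[of l] flat[of "Suc l"] that by (simp add: gain_Suc)
  ultimately have init: "v ! i = w ! i" if "i \<le> m" for i
    using that by (cases i) auto
  have "(\<Sum>i\<le>m. v ! i) = (\<Sum>i\<le>m. w ! i)" using init by (intro sum.cong) auto
  then have "v ! Suc m - w ! Suc m = sum_list v - sum_list w"
    using sum_list_yoke_vertex[OF V(1)] sum_list_yoke_vertex[OF V(2)] by simp
  then have "int n dvd (v ! Suc m - w ! Suc m)"
    using yoke_vertex_sum[OF V(1)] yoke_vertex_sum[OF V(2)] by simp
  then have "v ! Suc m = w ! Suc m"
    using V by (intro yoke_vertex_eqI) (auto simp: entry_eq_def is_bucket_def mod_eq_dvd_iff)
  then show ?thesis
    using init yoke_vertex_length[OF V(1)] yoke_vertex_length[OF V(2)]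
    by (intro nth_equalityI) (auto simp: less_Suc_eq_le le_Suc_eq)
qed

lemma exists_chip_left_of:
  assumes V: "v \<in> yoke_vertices n m" "w \<in> yoke_vertices n m"
  shows "l \<le> m \<Longrightarrow> t - gain v w l < 0 \<Longrightarrow> \<exists>j\<le>l. t - gain v w j < 0 \<and> (j = 0 \<or> w ! j = 1)"
proof (induction l)
  case (Suc l)
  show ?case
  proof (cases "w ! Suc l = 1")
    case False
    then have "t - gain v w l < 0"
      using gain_Suc[of v w l] yoke_vertex_bit[OF V(1), of "Suc l"] yoke_vertex_bit[OF V(2), of "Suc l"]
        Suc.prems by auto
    then show ?thesis using Suc.IH Suc.prems(1) le_SucI by fastforce
  qed (use Suc.prems in auto)
qed auto

text \<open>The chip to move is the rightmost one at an edge with negative flow; by maximality the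
  position right of it is free.\<close>

lemma exists_movable_chip:
  assumes V: "v \<in> yoke_vertices n m" "w \<in> yoke_vertices n m"
    and neg: "l0 \<le> m" "t - gain v w l0 < 0"
  obtains j where "j \<le> m" "t - gain v w j < 0" "j = 0 \<or> w ! j = 1" "j = m \<or> w ! Suc j = 0"
proof -
  define J where "J = {j. j \<le> m \<and> t - gain v w j < 0 \<and> (j = 0 \<or> w ! j = 1)}"
  have "J \<noteq> {}" using exists_chip_left_of[OF V neg] neg(1) unfolding J_def by force
  moreover have "finite J" unfolding J_def by auto
  ultimately have j: "Max J \<in> J" "\<And>i. i \<in> J \<Longrightarrow> i \<le> Max J" by auto
  have "Max J = m \<or> w ! Suc (Max J) = 0"
  proof (rule ccontr)
    assume "\<not> ?thesis"
    then have "Max J < m" "w ! Suc (Max J) = 1"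
      using j(1) yoke_vertex_bit[OF V(2), of "Suc (Max J)"] unfolding J_def by auto
    moreover from this have "t - gain v w (Suc (Max J)) < 0"
      using j(1) gain_Suc[of v w "Max J"] yoke_vertex_bit[OF V(1), of "Suc (Max J)"]
      unfolding J_def by auto
    ultimately have "Suc (Max J) \<in> J" unfolding J_def by auto
    then show False using j(2) by fastforce
  qed
  then show ?thesis using that j(1) unfolding J_def by blast
qed

definition reduce_entry :: "nat \<Rightarrow> nat \<Rightarrow> nat \<Rightarrow> int \<Rightarrow> int" where
  "reduce_entry n m p x = (if is_bucket m p then x mod int n else x)"

definition move_chip :: "nat \<Rightarrow> nat \<Rightarrow> int list \<Rightarrow> nat \<Rightarrow> int list" where
  "move_chip n m w j =
     w[j := reduce_entry n m j (w ! j - 1), Suc j := reduce_entry n m (Suc j) (w ! Suc j + 1)]"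

lemma chip_moved_move_chip:
  assumes "length w = m + 2" "j \<le> m"
  shows "chip_moved n m j (- 1) w (move_chip n m w j)"
  using assms unfolding chip_moved_def move_chip_def reduce_entry_def entry_eq_def
  by (auto simp: nth_list_update)

lemma entry_eq_imp_mod_eq: "entry_eq n m p a b \<Longrightarrow> a mod int n = b mod int n"
  unfolding entry_eq_def by (auto split: if_splits)

lemma sum_list_chip_moved_mod:
  assumes "length w' = m + 2" "length w = m + 2" "i \<le> m" "chip_moved n m i \<delta> w w'"
  shows "sum_list w' mod int n = sum_list w mod int n"
proof -
  have "sum_list w' mod int n = (\<Sum>p<m + 2. w' ! p mod int n) mod int n"
    unfolding sum_list_sum_nth assms(1) atLeast0LessThan by (simp only: mod_sum_eq)
  also have "\<dots> = (\<Sum>p<m + 2. (w ! p + \<delta> * (of_bool (p = i) - of_bool (p = Suc i))) mod int n) mod int n"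
  proof -
    have "(\<Sum>p<m + 2. w' ! p mod int n)
        = (\<Sum>p<m + 2. (w ! p + \<delta> * (of_bool (p = i) - of_bool (p = Suc i))) mod int n)"
      using entry_eq_imp_mod_eq[OF chip_movedD[OF assms(4)]] by (intro sum.cong) auto
    then show ?thesis by simp
  qed
  also have "\<dots> = (\<Sum>p<m + 2. w ! p + \<delta> * (of_bool (p = i) - of_bool (p = Suc i))) mod int n"
    by (simp only: mod_sum_eq)
  also have "(\<Sum>p<m + 2. w ! p + \<delta> * (of_bool (p = i) - of_bool (p = Suc i))) = sum_list w"
  proof -
    have "(\<Sum>p<m + 2. of_bool (p = i) - of_bool (p = Suc i) :: int) = 0"
      using assms(3) by (simp add: sum_subtractf of_bool_def sum.delta del: lessThan_Suc)
    then show ?thesis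
      using assms(2) by (simp add: sum_list_sum_nth atLeast0LessThan sum.distrib sum_distrib_left[symmetric]
          del: lessThan_Suc)
  qed
  finally show ?thesis .
qed

lemma move_chip_vertex:
  assumes w: "w \<in> yoke_vertices n m" and n: "1 \<le> n"
    and j: "j \<le> m" "j = 0 \<or> w ! j = 1" "j = m \<or> w ! Suc j = 0"
  shows "move_chip n m w j \<in> yoke_vertices n m"
proof -
  let ?w' = "move_chip n m w j"
  have len: "length w = m + 2" "length ?w' = m + 2"
    using yoke_vertex_length[OF w] unfolding move_chip_def by auto
  have "if is_bucket m p then 0 \<le> ?w' ! p \<and> ?w' ! p < int n else ?w' ! p \<in> {0, 1}" if "p < m + 2" for p
    using w that j n len(1) unfolding yoke_vertices_def move_chip_def reduce_entry_def is_bucket_def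
    by (auto simp: nth_list_update)
  moreover have "sum_list ?w' mod int n = 0"
    using sum_list_chip_moved_mod[OF len(2,1) j(1) chip_moved_move_chip[OF len(1) j(1)]]
      yoke_vertex_sum[OF w]
    by simp
  ultimately show ?thesis using len(2) unfolding yoke_vertices_def by blast
qed

lemma yoke_adj_intro:
  assumes V: "v \<in> yoke_vertices n m" "w \<in> yoke_vertices n m" "v \<noteq> w"
    and i: "i \<le> m" and \<delta>: "\<delta> = 1 \<or> \<delta> = -1"
    and moved: "chip_moved n m i \<delta> v w"
  shows "yoke_adj n m v w"
proof -
  have "v ! p = w ! p" if "p < m + 2" "p \<noteq> i" "p \<noteq> i + 1" for p
    using yoke_vertex_eqI[OF V(2,1) that(1)] chip_movedD[OF moved that(1)] that(2,3) by simp
  then have "\<forall>p<m + 2. p \<noteq> i \<and> p \<noteq> i + 1 \<longrightarrow> v ! p = w ! p" by blast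
  moreover have
    "(entry_eq n m i (v ! i) (w ! i + 1) \<and> entry_eq n m (i + 1) (v ! (i + 1)) (w ! (i + 1) - 1)) \<or>
     (entry_eq n m i (v ! i) (w ! i - 1) \<and> entry_eq n m (i + 1) (v ! (i + 1)) (w ! (i + 1) + 1))"
    using \<delta> chip_movedD[OF moved, of i] chip_movedD[OF moved, of "Suc i"] i entry_eq_flip by auto
  ultimately show ?thesis using V i unfolding yoke_adj_def by blast
qed

lemma yoke_move_chip_cost:
  assumes V: "v \<in> yoke_vertices n m" "w \<in> yoke_vertices n m" and n: "1 \<le> n"
    and res: "t mod int n = (v ! 0 - w ! 0) mod int n" and neg: "l0 \<le> m" "t - gain v w l0 < 0"
  obtains w' t' where "w' \<in> yoke_vertices n m" "w' = w \<or> yoke_adj n m w w'"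
    "t' mod int n = (v ! 0 - w' ! 0) mod int n"
    "flow_cost (gain v w') m t' = flow_cost (gain v w) m t - 1"
proof -
  obtain j where j: "j \<le> m" "t - gain v w j < 0" "j = 0 \<or> w ! j = 1" "j = m \<or> w ! Suc j = 0"
    using exists_movable_chip[OF V neg] by blast
  define w' where "w' = move_chip n m w j"
  have moved: "chip_moved n m j (- 1) w w'"
    unfolding w'_def by (rule chip_moved_move_chip[OF yoke_vertex_length[OF V(2)] j(1)])
  have W': "w' \<in> yoke_vertices n m"
    unfolding w'_def using move_chip_vertex[OF V(2) n j(1,3,4)] .
  have "w' = w \<or> yoke_adj n m w w'"
    using yoke_adj_intro[OF V(2) W' _ j(1) _ moved] by auto
  moreover have "(t - - 1 * of_bool (j = 0)) mod int n = (v ! 0 - w' ! 0) mod int n"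
    using flow_edge_move(1)[OF j(1) moved] res by blast
  moreover have "flow_cost (gain v w') m (t - - 1 * of_bool (j = 0))
      = flow_cost (gain v w) m t - \<bar>t - gain v w j\<bar> + \<bar>t - gain v w j - - 1\<bar>"
    using flow_edge_move(2)[OF j(1) moved] by (rule flow_cost_update[OF j(1)])
  ultimately show ?thesis using that W' j(2) by auto
qed

lemma yoke_move_chip_cost_left:
  assumes V: "v \<in> yoke_vertices n m" "w \<in> yoke_vertices n m" and n: "1 \<le> n"
    and res: "t mod int n = (v ! 0 - w ! 0) mod int n" and pos: "l0 \<le> m" "0 < t - gain v w l0"
  obtains v' t' where "v' \<in> yoke_vertices n m" "v' = v \<or> yoke_adj n m v v'"
    "t' mod int n = (v' ! 0 - w ! 0) mod int n"
    "flow_cost (gain v' w) m t' = flow_cost (gain v w) m t - 1"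
proof -
  have "(- t) mod int n = (w ! 0 - v ! 0) mod int n"
    using res by (metis minus_diff_eq mod_minus_eq)
  moreover have "- t - gain w v l0 < 0" using pos(2) gain_swap[of w v l0] by simp
  ultimately obtain v' t' where v': "v' \<in> yoke_vertices n m" "v' = v \<or> yoke_adj n m v v'"
    "t' mod int n = (w ! 0 - v' ! 0) mod int n"
    "flow_cost (gain w v') m t' = flow_cost (gain w v) m (- t) - 1"
    using yoke_move_chip_cost[OF V(2,1) n _ pos(1)] by blast
  have "(- t') mod int n = (v' ! 0 - w ! 0) mod int n"
    using v'(3) by (metis minus_diff_eq mod_minus_eq)
  moreover have "flow_cost (gain v' w) m (- t') = flow_cost (gain v w) m t - 1"
    using v'(4) flow_cost_gain_swap[of v' w m t'] flow_cost_gain_swap[of w v m t] by simp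
  ultimately show ?thesis using that v'(1,2) by blast
qed

text \<open>Induction on the cost: a positive (negative) flow lets us move a chip of \<open>v\<close> (of \<open>w\<close>) and
  lower the cost by one.\<close>

lemma yoke_path_le_flow_cost:
  assumes V: "v \<in> yoke_vertices n m" "w \<in> yoke_vertices n m" and n: "1 \<le> n"
    and res: "t mod int n = (v ! 0 - w ! 0) mod int n"
  shows "\<exists>k. int k \<le> flow_cost (gain v w) m t \<and> (v, w) \<in> yoke_edges n m ^^ k"
  using V res
proof (induction "nat (flow_cost (gain v w) m t)" arbitrary: v w t rule: less_induct)
  case less
  consider "flow_cost (gain v w) m t = 0" | l where "l \<le> m" "t - gain v w l < 0"
    | l where "l \<le> m" "0 < t - gain v w l"
    unfolding flow_cost_def by (metis (no_types, lifting) atMost_iff abs_0_eq linorder_neqE sum.neutral)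
  then show ?case
  proof cases
    case 1
    then show ?thesis using flow_cost_zero_imp_eq[OF less.prems] by auto
  next
    case (2 l)
    obtain w' t' where w': "w' \<in> yoke_vertices n m" "w' = w \<or> yoke_adj n m w w'"
      "t' mod int n = (v ! 0 - w' ! 0) mod int n"
      "flow_cost (gain v w') m t' = flow_cost (gain v w) m t - 1"
      using yoke_move_chip_cost[OF less.prems(1,2) n less.prems(3) 2] by blast
    then obtain k where k: "int k \<le> flow_cost (gain v w') m t'" "(v, w') \<in> yoke_edges n m ^^ k"
      using less.hyps[of v w' t'] less.prems(1) flow_cost_nonneg[of "gain v w'" m t'] by force
    have "(v, w) \<in> yoke_edges n m ^^ (if w' = w then k else Suc k)"
      using k(2) w'(2) yoke_adj_sym unfolding yoke_edges_def by auto
    then show ?thesis using k(1) w'(4) by (intro exI) auto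
  next
    case (3 l)
    obtain v' t' where v': "v' \<in> yoke_vertices n m" "v' = v \<or> yoke_adj n m v v'"
      "t' mod int n = (v' ! 0 - w ! 0) mod int n"
      "flow_cost (gain v' w) m t' = flow_cost (gain v w) m t - 1"
      using yoke_move_chip_cost_left[OF less.prems(1,2) n less.prems(3) 3] by blast
    then obtain k where k: "int k \<le> flow_cost (gain v' w) m t'" "(v', w) \<in> yoke_edges n m ^^ k"
      using less.hyps[of v' w t'] less.prems(2) flow_cost_nonneg[of "gain v' w" m t'] by force
    have "(v, w) \<in> yoke_edges n m ^^ (if v' = v then k else Suc k)"
      using k(2) v'(2) relpow_Suc_I2[of v v' "yoke_edges n m"] unfolding yoke_edges_def by auto
    then show ?thesis using k(1) v'(4) by (intro exI) auto
  qed
qed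

section \<open>The diameter\<close>

definition yoke_vertex_of :: "nat \<Rightarrow> int \<Rightarrow> int list \<Rightarrow> int list" where
  "yoke_vertex_of n b xs = b # xs @ [(- (b + sum_list xs)) mod int n]"

lemma yoke_vertex_of_mem:
  assumes "1 \<le> n" "0 \<le> b" "b < int n" "length xs = m" "set xs \<subseteq> {0, 1}"
  shows "yoke_vertex_of n b xs \<in> yoke_vertices n m"
proof -
  have "if is_bucket m j then 0 \<le> yoke_vertex_of n b xs ! j \<and> yoke_vertex_of n b xs ! j < int n
        else yoke_vertex_of n b xs ! j \<in> {0, 1}" if j: "j < m + 2" for j
  proof -
    consider "j = 0" | "1 \<le> j \<and> j \<le> m" | "j = Suc m" using j by linarith
    then show ?thesis
    proof cases
      case 2
      then have "xs ! (j - 1) \<in> set xs" using assms(4) by (auto intro!: nth_mem)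
      then have "xs ! (j - 1) \<in> {0, 1}" using assms(5) by blast
      then show ?thesis using 2 assms(4) unfolding yoke_vertex_of_def is_bucket_def
        by (cases j) (simp_all add: nth_append)
    qed (use assms in \<open>auto simp: yoke_vertex_of_def is_bucket_def nth_append\<close>)
  qed
  moreover have "sum_list (yoke_vertex_of n b xs) = (b + sum_list xs) + (- (b + sum_list xs)) mod int n"
    unfolding yoke_vertex_of_def by simp
  then have "sum_list (yoke_vertex_of n b xs) mod int n = 0"
    by (simp only: mod_add_right_eq) simp
  moreover have "length (yoke_vertex_of n b xs) = m + 2"
    using assms(4) unfolding yoke_vertex_of_def by simp
  ultimately show ?thesis unfolding yoke_vertices_def by blast
qed

lemma gain_yoke_vertex_of:
  assumes "l \<le> m" "length xs = m" "length ys = m"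
  shows "gain (yoke_vertex_of n b xs) (yoke_vertex_of n c ys) l = (\<Sum>i<l. ys ! i - xs ! i)"
  using assms(1)
proof (induction l)
  case (Suc l)
  have "yoke_vertex_of n b xs ! Suc l = xs ! l" "yoke_vertex_of n c ys ! Suc l = ys ! l"
    using Suc.prems assms(2,3) unfolding yoke_vertex_of_def by (simp_all add: nth_append)
  then show ?case using Suc by (simp add: gain_Suc)
qed simp

lemma yoke_dist_le_formula:
  assumes n: "1 \<le> n" and V: "u \<in> yoke_vertices n m" "v \<in> yoke_vertices n m"
  shows "yoke_dist n m u v \<le> enat (yoke_diam_formula n m)"
proof -
  obtain t where t: "t mod int n = (u ! 0 - v ! 0) mod int n"
    "flow_cost (gain u v) m t \<le> int (yoke_diam_formula n m)"
    using yoke_diam_formula_upper[OF lazy_walk_gain[OF V] n] by blast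
  obtain k where k: "int k \<le> flow_cost (gain u v) m t" "(u, v) \<in> yoke_edges n m ^^ k"
    using yoke_path_le_flow_cost[OF V n t(1)] by blast
  have "yoke_dist n m u v \<le> enat k"
    unfolding yoke_dist_def using k(2) by (intro INF_lower) simp
  also have "\<dots> \<le> enat (yoke_diam_formula n m)" using k(1) t(2) by simp
  finally show ?thesis .
qed

lemma yoke_dist_ge_formula:
  assumes n: "1 \<le> n"
  obtains u v where "u \<in> yoke_vertices n m" "v \<in> yoke_vertices n m"
    "enat (yoke_diam_formula n m) \<le> yoke_dist n m u v"
proof -
  obtain g :: "nat \<Rightarrow> int" and r where g: "\<And>i. g i \<in> {0, 1}"
    and far: "\<And>t. t mod int n = r mod int n
      \<Longrightarrow> int (yoke_diam_formula n m) \<le> flow_cost (\<lambda>l. \<Sum>i<l. g i) m t"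
    using yoke_diam_formula_lower[OF n] by blast
  define u where "u = yoke_vertex_of n (r mod int n) (replicate m 0)"
  define v where "v = yoke_vertex_of n 0 (map g [0..<m])"
  have U: "u \<in> yoke_vertices n m"
    unfolding u_def using n by (intro yoke_vertex_of_mem) auto
  have "set (map g [0..<m]) \<subseteq> {0, 1}" using g by auto
  then have V: "v \<in> yoke_vertices n m"
    unfolding v_def using n by (intro yoke_vertex_of_mem[OF n]) auto
  have walk: "flow_cost (gain u v) m t = flow_cost (\<lambda>l. \<Sum>i<l. g i) m t" for t
    unfolding flow_cost_def u_def v_def by (intro sum.cong) (simp_all add: gain_yoke_vertex_of)
  have "enat (yoke_diam_formula n m) \<le> yoke_dist n m u v"
    unfolding yoke_dist_def
  proof (rule INF_greatest)
    fix k assume "k \<in> {k. (u, v) \<in> yoke_edges n m ^^ k}"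
    then obtain t where "t mod int n = (u ! 0 - v ! 0) mod int n" "flow_cost (gain u v) m t \<le> int k"
      using yoke_path_flow_cost by blast
    then have "int (yoke_diam_formula n m) \<le> int k"
      using far[of t] walk[of t] unfolding u_def v_def by (simp add: yoke_vertex_of_def)
    then show "enat (yoke_diam_formula n m) \<le> enat k" by simp
  qed
  then show ?thesis using that U V by blast
qed

lemma yoke_diam_eq_formula:
  assumes "1 \<le> n"
  shows "yoke_diam n m = enat (yoke_diam_formula n m)"
proof (rule antisym)
  show "yoke_diam n m \<le> enat (yoke_diam_formula n m)"
    unfolding yoke_diam_def by (intro SUP_least yoke_dist_le_formula[OF assms])
  obtain u v where "u \<in> yoke_vertices n m" "v \<in> yoke_vertices n m"
    "enat (yoke_diam_formula n m) \<le> yoke_dist n m u v"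
    using yoke_dist_ge_formula[OF assms] by blast
  then show "enat (yoke_diam_formula n m) \<le> yoke_diam n m"
    unfolding yoke_diam_def by (meson SUP_upper2)
qed

lemma add_one_choose_two: "(k + 1) choose 2 = tri k"
  unfolding tri_def choose_two by (simp add: mult.commute)

theorem mainTheorem1:
  fixes n m :: nat
  assumes "n \<ge> 1"
  shows "(n = 1 \<longrightarrow> yoke_diam n m =
            enat ((((m + 1) div 2 + 1) choose 2) + ((m div 2 + 1) choose 2)))
       \<and> (m \<le> n \<longrightarrow> yoke_diam n m = enat (n * (m + 1) div 2))
       \<and> (2 \<le> n \<and> n \<le> m \<longrightarrow>
            (let d0 = (((m + n) div 2 + 1) choose 2) + (((m - n + 1) div 2 + 1) choose 2) in
              (if even (m - n) \<or> n \<le> (m + 2) div 2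
               then yoke_diam n m = enat d0
               else yoke_diam n m = enat (d0 + n - (m + 2) div 2))))"
proof -
  txt \<open>The three clauses overlap for \<open>n = 1 \<and> m \<le> 1\<close> and for \<open>m = n\<close>; there the values agree.\<close>
  have "tri ((m + 1) div 2) + tri (m div 2) = n * (m + 1) div 2" if "n = 1" "m \<le> n"
    using that by (cases m) (auto simp: tri_def)
  moreover have "tri ((m + n) div 2) + tri ((m - n + 1) div 2) = n * (m + 1) div 2" if "m = n"
    using that by (simp add: tri_def)
  ultimately show ?thesis
    using yoke_diam_eq_formula[OF assms]
    unfolding yoke_diam_formula_def add_one_choose_two Let_def by auto
qed

end
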